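(* Let $Q$ be a compact metric space, $p_0:Q\to[0,+\infty]$ a function which is not identically $+\infty$, $c:Q\times Q\to[0,+\infty)$ continuous with $c(x,x)=0$ for all $x$, and $f$ a nonnegative Radon measure on $Q$. Let $\mathcal A=\{p:Q\to\overline{\mathbb{R}}\ :\ p\le p_0 \text{ on } Q,\ p \text{ lower semicontinuous on } Q\}$. Then the problem $\max\{F(p)\ :\ p\in\mathcal A\}$ admits a solution $p_{opt}$, where $$F(p)=\int_Q\Big(\max_{y\in T_p(x)}p(y)\Big)\,df(x).$$
   Context: For $p\in\mathcal A$ and $x\in Q$: $v_p(x)=\min_{y\in Q}\{c(x,y)+p(y)\}$ and $T_p(x)=\{y\in Q\ :\ c(x,y)+p(y)=v_p(x)\}$ (the set of locations where a customer living at $x$ optimally buys). The integrand $\max_{y\in T_p(x)}p(y)$ corresponds to the tie-breaking rule that a customer at $x$ chooses, among optimal locations, one maximizing price (equivalently minimizing $c(x,\cdot)$ on $T_p(x)$). *)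

theory Defs
  imports "HOL-Analysis.Analysis"
begin

definition lsc_on :: "'a::metric_space set \<Rightarrow> ('a \<Rightarrow> ereal) \<Rightarrow> bool" where
  "lsc_on Q p \<longleftrightarrow> (\<forall>x\<in>Q. \<forall>t. t < p x \<longrightarrow>
      (\<exists>e>0. \<forall>y\<in>Q. dist y x < e \<longrightarrow> t < p y))"

definition admissible :: "'a::metric_space set \<Rightarrow> ('a \<Rightarrow> ereal) \<Rightarrow> ('a \<Rightarrow> ereal) set" where
  "admissible Q p0 = {p. (\<forall>x\<in>Q. p x \<le> p0 x) \<and> lsc_on Q p}"

text \<open>v_p(x) = min over y in Q of c(x,y)+p(y) (the minimum is attained; written as Inf).\<close>
definition vfun :: "'a set \<Rightarrow> ('a \<Rightarrow> 'a \<Rightarrow> real) \<Rightarrow> ('a \<Rightarrow> ereal) \<Rightarrow> 'a \<Rightarrow> ereal" where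
  "vfun Q c p x = (INF y\<in>Q. ereal (c x y) + p y)"

definition Tset :: "'a set \<Rightarrow> ('a \<Rightarrow> 'a \<Rightarrow> real) \<Rightarrow> ('a \<Rightarrow> ereal) \<Rightarrow> 'a \<Rightarrow> 'a set" where
  "Tset Q c p x = {y\<in>Q. ereal (c x y) + p y = vfun Q c p x}"

definition ereal_integral :: "'a measure \<Rightarrow> ('a \<Rightarrow> ereal) \<Rightarrow> ereal" where
  "ereal_integral M g =
     enn2ereal (\<integral>\<^sup>+ x. e2ennreal (g x) \<partial>M) - enn2ereal (\<integral>\<^sup>+ x. e2ennreal (- g x) \<partial>M)"

text \<open>F(p) = integral over Q of max_{y in T_p(x)} p(y) df(x) (max attained; written as Sup).\<close>
definition Ffun :: "'a set \<Rightarrow> ('a \<Rightarrow> 'a \<Rightarrow> real) \<Rightarrow> 'a measure \<Rightarrow> ('a \<Rightarrow> ereal) \<Rightarrow> ereal" where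
  "Ffun Q c f p = ereal_integral f (\<lambda>x. SUP y\<in>Tset Q c p x. p y)"

end

theory Submission
  imports Defs "HOL-Complex_Analysis.Great_Picard"
begin

text \<open>Replacing an admissible price p by the c-transform q(y) = sup over x of (v_p(x) - c(x,y))
  of its value function never decreases F: q <= p everywhere, while every location that is optimal
  for a customer under p remains optimal under q at the same price, so the integrand can only grow.
  Unless F(p) <= 0 = F(0), these c-transforms are uniformly bounded, and they are 1-Lipschitz for
  the pseudometric sup over x of |c(x,y) - c(x,y')|, hence equicontinuous. By Arzela-Ascoli a
  maximizing sequence of them has a pointwise convergent subsequence. The highest optimal price
  max over T_q(x) of q is upper semicontinuous jointly in (q, x), so by dominated convergence F is
  upper semicontinuous along the subsequence and its limit is a maximizer.\<close>

lemma ereal_integral_cong: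
  assumes "\<And>x. x \<in> space M \<Longrightarrow> g x = h x"
  shows "ereal_integral M g = ereal_integral M h"
  unfolding ereal_integral_def using assms by (simp cong: nn_integral_cong)

lemma ereal_integral_mono:
  assumes "\<And>x. x \<in> space M \<Longrightarrow> g x \<le> h x"
  shows "ereal_integral M g \<le> ereal_integral M h"
proof -
  have "(\<integral>\<^sup>+ x. e2ennreal (g x) \<partial>M) \<le> (\<integral>\<^sup>+ x. e2ennreal (h x) \<partial>M)"
    and "(\<integral>\<^sup>+ x. e2ennreal (- h x) \<partial>M) \<le> (\<integral>\<^sup>+ x. e2ennreal (- g x) \<partial>M)"
    by (auto intro!: nn_integral_mono e2ennreal_mono simp: assms)
  then show ?thesis
    unfolding ereal_integral_def by (intro ereal_minus_mono) (simp_all add: less_eq_ennreal.rep_eq)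
qed

lemma ereal_integral_nonpos:
  assumes "\<And>x. x \<in> space M \<Longrightarrow> g x \<le> 0"
  shows "ereal_integral M g \<le> 0"
proof -
  have "(\<integral>\<^sup>+ x. e2ennreal (g x) \<partial>M) = 0"
    using assms by (simp add: e2ennreal_neg cong: nn_integral_cong)
  then show ?thesis
    unfolding ereal_integral_def by (simp add: zero_ennreal.rep_eq)
qed

lemma ereal_integral_bounded:
  assumes "finite_measure M" "g \<in> borel_measurable M" "\<And>x. x \<in> space M \<Longrightarrow> \<bar>g x\<bar> \<le> B"
  shows "ereal_integral M (\<lambda>x. ereal (g x)) = ereal (integral\<^sup>L M g)"
proof -
  have int: "integrable M g"
    using assms by (intro finite_measure.integrable_const_bound[where B=B]) auto
  have fin: "enn2ereal X = ereal (enn2real X)" if "X \<noteq> \<infinity>" for X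
    using that by (cases X rule: ennreal_cases) auto
  have "(\<integral>\<^sup>+ x. ennreal (g x) \<partial>M) \<noteq> \<infinity>" "(\<integral>\<^sup>+ x. ennreal (- g x) \<partial>M) \<noteq> \<infinity>"
    using integrableD[OF int] by auto
  then show ?thesis
    unfolding ereal_integral_def real_lebesgue_integral_def[OF int] by (simp add: fin)
qed

lemma lsc_on_bounded_below:
  assumes "compact Q" "lsc_on Q p" "\<forall>y\<in>Q. p y \<noteq> -\<infinity>"
  obtains m where "\<forall>y\<in>Q. ereal m \<le> p y"
proof -
  have "\<exists>t. ereal t < p x" if "x \<in> Q" for x
    using assms(3) that by (cases "p x") (auto intro: exI[of _ "real_of_ereal (p x) - 1"] exI[of _ 0])
  then obtain t where t: "\<forall>x\<in>Q. ereal (t x) < p x" by metis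
  then have "\<forall>x\<in>Q. \<exists>e>0. \<forall>y\<in>Q. dist y x < e \<longrightarrow> ereal (t x) < p y"
    using assms(2) unfolding lsc_on_def by simp
  then obtain e where e: "\<forall>x\<in>Q. e x > 0 \<and> (\<forall>y\<in>Q. dist y x < e x \<longrightarrow> ereal (t x) < p y)"
    by metis
  obtain K where K: "K \<subseteq> Q" "finite K" "Q \<subseteq> (\<Union>x\<in>K. ball x (e x))"
    by (rule compactE_image[OF assms(1), of Q "\<lambda>x. ball x (e x)"]) (use e in force)+
  show thesis
  proof (rule that[of "Min (t ` K)"], intro ballI)
    fix y assume y: "y \<in> Q"
    then obtain x where "x \<in> K" "dist y x < e x"
      using K(3) by (auto simp: dist_commute)
    then have "Min (t ` K) \<le> t x" "ereal (t x) < p y"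
      using K e y by auto
    then show "ereal (Min (t ` K)) \<le> p y"
      by (metis ereal_less_eq(3) less_imp_le order_trans)
  qed
qed

lemma compact_countable_dense:
  fixes Q :: "'a::metric_space set"
  assumes "compact Q"
  obtains R where "countable R" "R \<subseteq> Q" "\<And>x d. x \<in> Q \<Longrightarrow> d > 0 \<Longrightarrow> \<exists>r\<in>R. dist x r < d"
proof -
  have "\<exists>T. T \<subseteq> Q \<and> finite T \<and> Q \<subseteq> (\<Union>t\<in>T. ball t (inverse (Suc n)))" for n
    by (rule compactE_image[OF assms, of Q "\<lambda>t. ball t (inverse (Suc n))"]) auto
  then obtain T where T: "\<And>n. T n \<subseteq> Q \<and> finite (T n) \<and> Q \<subseteq> (\<Union>t\<in>T n. ball t (inverse (Suc n)))"
    by metis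
  show thesis
  proof (rule that[of "\<Union>n. T n"])
    show "countable (\<Union>n. T n)" "(\<Union>n. T n) \<subseteq> Q"
      using T by (auto intro: countable_finite)
    fix x d assume "x \<in> Q" "(0::real) < d"
    moreover obtain n where n: "inverse (real (Suc n)) < d"
      using reals_Archimedean \<open>0 < d\<close> by blast
    ultimately obtain t where "t \<in> T n" "dist t x < inverse (Suc n)"
      using T[of n] by auto
    then show "\<exists>r\<in>(\<Union>n. T n). dist x r < d"
      using n by (metis UN_I UNIV_I dist_commute less_trans)
  qed
qed

locale cost_space =
  fixes Q :: "'a::metric_space set" and c :: "'a \<Rightarrow> 'a \<Rightarrow> real"
  assumes compact_Q: "compact Q" and Q_nonempty: "Q \<noteq> {}"
    and continuous_c: "continuous_on (Q \<times> Q) (\<lambda>(x, y). c x y)"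
    and c_nonneg: "\<And>x y. x \<in> Q \<Longrightarrow> y \<in> Q \<Longrightarrow> 0 \<le> c x y"
begin

lemma c_bounded: obtains M where "\<And>x y. x \<in> Q \<Longrightarrow> y \<in> Q \<Longrightarrow> c x y \<le> M"
proof -
  obtain z where "z \<in> Q \<times> Q" "\<forall>w\<in>Q \<times> Q. (\<lambda>(x, y). c x y) w \<le> (\<lambda>(x, y). c x y) z"
    using continuous_attains_sup[OF compact_Times[OF compact_Q compact_Q] _ continuous_c] Q_nonempty
    by auto
  then show thesis
    using that[of "(\<lambda>(x, y). c x y) z"] by auto
qed

lemma c_tendsto:
  assumes "\<And>n. xs n \<in> Q" "xs \<longlonglongrightarrow> x" "x \<in> Q" "\<And>n. ys n \<in> Q" "ys \<longlonglongrightarrow> y" "y \<in> Q"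
  shows "(\<lambda>n. c (xs n) (ys n)) \<longlonglongrightarrow> c x y"
  using continuous_on_tendsto_compose[OF continuous_c tendsto_Pair[OF assms(2,5)]] assms(1,3,4,6)
  by simp

text \<open>q is c-Lipschitz iff it is 1-Lipschitz for the pseudometric
  d(y, y') = sup over x in Q of |c x y - c x y'|.\<close>
definition c_lipschitz :: "('a \<Rightarrow> real) \<Rightarrow> bool" where
  "c_lipschitz q \<longleftrightarrow>
     (\<forall>e>0. \<forall>y\<in>Q. \<forall>y'\<in>Q. (\<forall>x\<in>Q. \<bar>c x y - c x y'\<bar> < e) \<longrightarrow> \<bar>q y - q y'\<bar> \<le> e)"

lemma c_lipschitz_uniformly_equicontinuous:
  assumes "e > 0"
  obtains d where "d > 0"
    "\<And>q y y'. c_lipschitz q \<Longrightarrow> y \<in> Q \<Longrightarrow> y' \<in> Q \<Longrightarrow> dist y y' < d \<Longrightarrow> \<bar>q y - q y'\<bar> \<le> e"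
proof -
  have "uniformly_continuous_on (Q \<times> Q) (\<lambda>(x, y). c x y)"
    using compact_uniformly_continuous[OF continuous_c] compact_Times[OF compact_Q compact_Q] by blast
  then obtain d where "d > 0" and d: "\<forall>a\<in>Q \<times> Q. \<forall>b\<in>Q \<times> Q. dist b a < d \<longrightarrow>
      dist ((\<lambda>(x, y). c x y) b) ((\<lambda>(x, y). c x y) a) < e"
    unfolding uniformly_continuous_on_def using assms by metis
  have "\<bar>c x y - c x y'\<bar> < e" if "x \<in> Q" "y \<in> Q" "y' \<in> Q" "dist y y' < d" for x y y'
    using d[rule_format, of "(x, y')" "(x, y)"] that by (simp add: dist_Pair_Pair dist_real_def)
  then show thesis
    using that[OF \<open>d > 0\<close>] assms unfolding c_lipschitz_def by blast
qed

lemma c_lipschitz_continuous_on: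
  assumes "c_lipschitz q" shows "continuous_on Q q"
  unfolding continuous_on_iff
proof (intro ballI allI impI)
  fix x and e :: real assume "x \<in> Q" "0 < e"
  then obtain d where "d > 0"
    "\<And>q y y'. c_lipschitz q \<Longrightarrow> y \<in> Q \<Longrightarrow> y' \<in> Q \<Longrightarrow> dist y y' < d \<Longrightarrow> \<bar>q y - q y'\<bar> \<le> e / 2"
    using c_lipschitz_uniformly_equicontinuous[of "e / 2"] by auto
  with assms \<open>x \<in> Q\<close> \<open>0 < e\<close> show "\<exists>d>0. \<forall>x'\<in>Q. dist x' x < d \<longrightarrow> dist (q x') (q x) < e"
    by (force simp: dist_real_def)
qed

lemma c_lipschitz_bounded:
  assumes "c_lipschitz q" obtains B where "\<And>y. y \<in> Q \<Longrightarrow> \<bar>q y\<bar> \<le> B"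
  using compact_imp_bounded[OF compact_continuous_image[OF c_lipschitz_continuous_on[OF assms] compact_Q]]
  unfolding bounded_real by blast

lemma c_lipschitz_limit:
  assumes "\<And>n. c_lipschitz (qs n)" "\<And>y. y \<in> Q \<Longrightarrow> (\<lambda>n. qs n y) \<longlonglongrightarrow> q y"
  shows "c_lipschitz q"
  unfolding c_lipschitz_def
proof (intro allI impI ballI)
  fix e :: real and y y' assume "e > 0" "y \<in> Q" "y' \<in> Q" "\<forall>x\<in>Q. \<bar>c x y - c x y'\<bar> < e"
  then have "\<bar>qs n y - qs n y'\<bar> \<le> e" for n
    using assms(1)[of n] unfolding c_lipschitz_def by blast
  then show "\<bar>q y - q y'\<bar> \<le> e"
    using \<open>y \<in> Q\<close> \<open>y' \<in> Q\<close>
    by (intro tendsto_upperbound[OF tendsto_rabs[OF tendsto_diff[OF assms(2) assms(2)]]]) auto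
qed

lemma c_lipschitz_tendsto_diagonal:
  assumes "\<And>n. c_lipschitz (qs n)" "(\<lambda>n. qs n y) \<longlonglongrightarrow> q y"
    and "\<And>n. ys n \<in> Q" "ys \<longlonglongrightarrow> y" "y \<in> Q"
  shows "(\<lambda>n. qs n (ys n)) \<longlonglongrightarrow> q y"
  unfolding tendsto_iff
proof (intro allI impI)
  fix e :: real assume "e > 0"
  then obtain d where "d > 0" and d:
    "\<And>q y y'. c_lipschitz q \<Longrightarrow> y \<in> Q \<Longrightarrow> y' \<in> Q \<Longrightarrow> dist y y' < d \<Longrightarrow> \<bar>q y - q y'\<bar> \<le> e / 2"
    using c_lipschitz_uniformly_equicontinuous[of "e / 2"] by auto
  have "\<forall>\<^sub>F n in sequentially. dist (ys n) y < d"
    using assms(4) \<open>d > 0\<close> unfolding tendsto_iff by blast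
  moreover have "\<forall>\<^sub>F n in sequentially. dist (qs n y) (q y) < e / 2"
    using assms(2) half_gt_zero[OF \<open>e > 0\<close>] unfolding tendsto_iff by blast
  ultimately show "\<forall>\<^sub>F n in sequentially. dist (qs n (ys n)) (q y) < e"
  proof eventually_elim
    case (elim n)
    then have "\<bar>qs n (ys n) - qs n y\<bar> \<le> e / 2"
      using d assms by blast
    with elim show ?case
      unfolding dist_real_def by linarith
  qed
qed

text \<open>Arzela-Ascoli; the library version requires a Euclidean domain.\<close>
lemma c_lipschitz_convergent_subsequence:
  assumes "\<And>n. c_lipschitz (qs n)" "\<And>n y. y \<in> Q \<Longrightarrow> \<bar>qs n y\<bar> \<le> B"
  obtains k where "strict_mono (k :: nat \<Rightarrow> nat)" "\<And>y. y \<in> Q \<Longrightarrow> convergent (\<lambda>n. qs (k n) y)"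
proof -
  obtain R where R: "countable R" "R \<subseteq> Q" and dense: "\<And>x d. x \<in> Q \<Longrightarrow> d > 0 \<Longrightarrow> \<exists>r\<in>R. dist x r < d"
    using compact_countable_dense[OF compact_Q] by blast
  obtain k where k: "strict_mono (k :: nat \<Rightarrow> nat)" and conv_R: "\<And>r. r \<in> R \<Longrightarrow> convergent (\<lambda>n. qs (k n) r)"
    using function_convergent_subsequence[OF R(1), of qs B] assms(2) R(2) unfolding convergent_def
    by (auto simp: subset_iff)
  have "Cauchy (\<lambda>n. qs (k n) y)" if "y \<in> Q" for y
    unfolding Cauchy_def
  proof (intro allI impI)
    fix e :: real assume "e > 0"
    then obtain d where "d > 0" and d:
      "\<And>q y y'. c_lipschitz q \<Longrightarrow> y \<in> Q \<Longrightarrow> y' \<in> Q \<Longrightarrow> dist y y' < d \<Longrightarrow> \<bar>q y - q y'\<bar> \<le> e / 4"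
      using c_lipschitz_uniformly_equicontinuous[of "e / 4"] by auto
    obtain r where r: "r \<in> R" "dist y r < d"
      using dense[OF \<open>y \<in> Q\<close> \<open>d > 0\<close>] by blast
    have "Cauchy (\<lambda>n. qs (k n) r)"
      using conv_R[OF r(1)] by (simp add: Cauchy_convergent_iff)
    then have "\<exists>N. \<forall>m\<ge>N. \<forall>n\<ge>N. dist (qs (k m) r) (qs (k n) r) < e / 4"
      by (rule metric_CauchyD) (use \<open>e > 0\<close> in simp)
    then obtain N where N: "\<forall>m\<ge>N. \<forall>n\<ge>N. dist (qs (k m) r) (qs (k n) r) < e / 4"
      by blast
    have close: "\<bar>qs (k n) y - qs (k n) r\<bar> \<le> e / 4" for n
      using d assms(1) \<open>y \<in> Q\<close> r R(2) by blast
    show "\<exists>N. \<forall>m\<ge>N. \<forall>n\<ge>N. dist (qs (k m) y) (qs (k n) y) < e"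
    proof (intro exI allI impI)
      fix m n assume "N \<le> m" "N \<le> n"
      then have "\<bar>qs (k m) r - qs (k n) r\<bar> < e / 4"
        using N by (simp add: dist_real_def)
      with close[of m] close[of n] show "dist (qs (k m) y) (qs (k n) y) < e"
        unfolding dist_real_def by linarith
    qed
  qed
  then show thesis
    using that[OF k] by (simp add: Cauchy_convergent_iff)
qed


definition best_locations :: "('a \<Rightarrow> real) \<Rightarrow> 'a \<Rightarrow> 'a set" where
  "best_locations q x = {y\<in>Q. \<forall>z\<in>Q. c x y + q y \<le> c x z + q z}"

definition best_price :: "('a \<Rightarrow> real) \<Rightarrow> 'a \<Rightarrow> real" where
  "best_price q x = (SUP y\<in>best_locations q x. q y)"

lemma best_locations_subset: "best_locations q x \<subseteq> Q"
  unfolding best_locations_def by blast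

lemma best_price_attained:
  assumes "c_lipschitz q" "x \<in> Q"
  obtains y where "y \<in> best_locations q x" "best_price q x = q y"
    "\<And>y'. y' \<in> best_locations q x \<Longrightarrow> q y' \<le> q y"
proof -
  have cont_q: "continuous_on Q q"
    using c_lipschitz_continuous_on[OF assms(1)] .
  have "continuous_on Q (\<lambda>y. (\<lambda>(x, y). c x y) (x, y))"
    by (rule continuous_on_compose2[OF continuous_c]) (auto intro!: continuous_intros simp: assms(2))
  then have cont: "continuous_on Q (\<lambda>y. c x y + q y)"
    using cont_q by (auto intro: continuous_on_add)
  obtain y0 where y0: "y0 \<in> Q" "\<forall>z\<in>Q. c x y0 + q y0 \<le> c x z + q z"
    using continuous_attains_inf[OF compact_Q Q_nonempty cont] by blast
  have "best_locations q x = Q \<inter> (\<lambda>y. c x y + q y) -` {..c x y0 + q y0}"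
    using y0 unfolding best_locations_def by auto
  moreover have "compact (Q \<inter> (Q \<inter> (\<lambda>y. c x y + q y) -` {..c x y0 + q y0}))"
    using continuous_closed_preimage[OF cont compact_imp_closed[OF compact_Q] closed_atMost]
    by (rule compact_Int_closed[OF compact_Q])
  ultimately have "compact (best_locations q x)"
    by simp
  moreover have "y0 \<in> best_locations q x"
    using y0 unfolding best_locations_def by blast
  moreover have "continuous_on (best_locations q x) q"
    using continuous_on_subset[OF cont_q best_locations_subset] .
  ultimately obtain y where y: "y \<in> best_locations q x" "\<And>y'. y' \<in> best_locations q x \<Longrightarrow> q y' \<le> q y"
    using continuous_attains_sup[of "best_locations q x" q] by auto
  moreover have "best_price q x = q y"
    unfolding best_price_def using y by (intro cSup_eq_maximum) auto
  ultimately show thesis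
    using that by blast
qed

lemma best_price_bounded:
  assumes "c_lipschitz q" "x \<in> Q" "\<And>y. y \<in> Q \<Longrightarrow> \<bar>q y\<bar> \<le> B"
  shows "\<bar>best_price q x\<bar> \<le> B"
proof -
  obtain y where "y \<in> best_locations q x" "best_price q x = q y"
    using best_price_attained[OF assms(1,2)] .
  then show ?thesis
    using assms(3) best_locations_subset by auto
qed

lemma best_price_ge:
  assumes "c_lipschitz q" "x \<in> Q" "y \<in> best_locations q x"
  shows "q y \<le> best_price q x"
  using best_price_attained[OF assms(1,2)] assms(3) by metis

lemma best_locations_limit:
  assumes qs: "\<And>n. c_lipschitz (qs n)" "\<And>z. z \<in> Q \<Longrightarrow> (\<lambda>n. qs n z) \<longlonglongrightarrow> q z"
    and xs: "\<And>n. xs n \<in> Q" "xs \<longlonglongrightarrow> x" "x \<in> Q"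
    and ys: "\<And>n. ys n \<in> best_locations (qs n) (xs n)" "\<And>n. a \<le> qs n (ys n)"
  shows "\<exists>y\<in>best_locations q x. a \<le> q y"
proof -
  have ys_Q: "ys n \<in> Q" for n
    using ys(1) best_locations_subset by blast
  have "\<exists>y\<in>Q. \<exists>r. strict_mono r \<and> (ys \<circ> r) \<longlonglongrightarrow> y"
    using compact_Q ys_Q unfolding compact_def by blast
  then obtain y r where y: "y \<in> Q" and r: "strict_mono r" and lim_y: "(\<lambda>n. ys (r n)) \<longlonglongrightarrow> y"
    by (auto simp: o_def)
  have lim_q: "(\<lambda>n. qs (r n) z) \<longlonglongrightarrow> q z" if "z \<in> Q" for z
    using LIMSEQ_subseq_LIMSEQ[OF qs(2)[OF that] r] by (simp add: o_def)
  have lim_x: "(\<lambda>n. xs (r n)) \<longlonglongrightarrow> x"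
    using LIMSEQ_subseq_LIMSEQ[OF xs(2) r] by (simp add: o_def)
  have lim_qy: "(\<lambda>n. qs (r n) (ys (r n))) \<longlonglongrightarrow> q y"
    using c_lipschitz_tendsto_diagonal[where qs="\<lambda>n. qs (r n)" and ys="\<lambda>n. ys (r n)" and q=q and y=y, OF qs(1) lim_q[OF y] ys_Q lim_y y] .
  have lim_cy: "(\<lambda>n. c (xs (r n)) (ys (r n))) \<longlonglongrightarrow> c x y"
    using c_tendsto[where ys="\<lambda>n. ys (r n)", OF xs(1) lim_x xs(3) ys_Q lim_y y] .
  have "c x y + q y \<le> c x z + q z" if z: "z \<in> Q" for z
  proof (rule tendsto_le[OF trivial_limit_sequentially _ tendsto_add[OF lim_cy lim_qy]])
    show "(\<lambda>n. c (xs (r n)) z + qs (r n) z) \<longlonglongrightarrow> c x z + q z"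
      using c_tendsto[OF xs(1) lim_x xs(3) _ tendsto_const z] lim_q[OF z] z
      by (intro tendsto_add) auto
    show "\<forall>\<^sub>F n in sequentially. c (xs (r n)) (ys (r n)) + qs (r n) (ys (r n)) \<le> c (xs (r n)) z + qs (r n) z"
      using ys(1) z unfolding best_locations_def by (intro always_eventually) blast
  qed
  moreover have "a \<le> q y"
    using ys(2) by (intro tendsto_lowerbound[OF lim_qy]) auto
  ultimately show ?thesis
    using y unfolding best_locations_def by blast
qed

lemma best_price_upper_semicontinuous:
  assumes qs: "\<And>n. c_lipschitz (qs n)" "\<And>z. z \<in> Q \<Longrightarrow> (\<lambda>n. qs n z) \<longlonglongrightarrow> q z"
    and xs: "\<And>n. xs n \<in> Q" "xs \<longlonglongrightarrow> x" "x \<in> Q"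
    and a: "\<And>n. a \<le> best_price (qs n) (xs n)"
  shows "a \<le> best_price q x"
proof -
  have "\<exists>y. y \<in> best_locations (qs n) (xs n) \<and> best_price (qs n) (xs n) = qs n y" for n
    using best_price_attained[OF qs(1) xs(1), of n] by blast
  then obtain ys where ys: "\<And>n. ys n \<in> best_locations (qs n) (xs n)"
    "\<And>n. best_price (qs n) (xs n) = qs n (ys n)"
    by metis
  obtain y where y: "y \<in> best_locations q x" "a \<le> q y"
    using best_locations_limit[OF qs xs ys(1), of a] a ys(2) by auto
  with best_price_ge[OF c_lipschitz_limit[OF qs] xs(3)] show ?thesis
    by fastforce
qed

lemma closed_best_price_superlevel:
  assumes "c_lipschitz q" shows "closed {x\<in>Q. a \<le> best_price q x}"
  unfolding closed_sequential_limits
proof (intro allI impI, elim conjE)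
  fix xs x assume xs: "\<forall>n. xs n \<in> {x\<in>Q. a \<le> best_price q x}" and "xs \<longlonglongrightarrow> x"
  moreover have "x \<in> Q"
    using closed_sequentially[OF compact_imp_closed[OF compact_Q]] xs \<open>xs \<longlonglongrightarrow> x\<close> by blast
  ultimately show "x \<in> {x\<in>Q. a \<le> best_price q x}"
    using best_price_upper_semicontinuous[of "\<lambda>n. q" q xs x a] assms by auto
qed

lemma best_price_limsup:
  assumes qs: "\<And>n. c_lipschitz (qs n)" "\<And>z. z \<in> Q \<Longrightarrow> (\<lambda>n. qs n z) \<longlonglongrightarrow> q z"
    and "x \<in> Q"
  shows "(\<lambda>n. max (best_price (qs n) x) (best_price q x)) \<longlonglongrightarrow> best_price q x"
  unfolding tendsto_iff
proof (intro allI impI, rule ccontr)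
  fix e :: real assume "e > 0"
  assume "\<not> (\<forall>\<^sub>F n in sequentially. dist (max (best_price (qs n) x) (best_price q x)) (best_price q x) < e)"
  then have "\<exists>\<^sub>F n in sequentially. best_price q x + e \<le> best_price (qs n) x"
    unfolding not_eventually
    by (rule frequently_elim1) (use \<open>e > 0\<close> in \<open>auto simp: dist_real_def max_def split: if_split_asm\<close>)
  then have "infinite {n. best_price q x + e \<le> best_price (qs n) x}"
    unfolding frequently_sequentially infinite_nat_iff_unbounded_le by simp
  then obtain r :: "nat \<Rightarrow> nat" where r: "strict_mono r"
    and big: "\<And>n. best_price q x + e \<le> best_price (qs (r n)) x"
    using infinite_enumerate by blast
  have "best_price q x + e \<le> best_price q x"
  proof (rule best_price_upper_semicontinuous[where xs="\<lambda>n. x"])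
    show "(\<lambda>n. qs (r n) z) \<longlonglongrightarrow> q z" if "z \<in> Q" for z
      using LIMSEQ_subseq_LIMSEQ[OF qs(2)[OF that] r] by (simp add: o_def)
  qed (use qs(1) \<open>x \<in> Q\<close> big in auto)
  then show False
    using \<open>e > 0\<close> by simp
qed


lemma Tset_ereal: "Tset Q c (\<lambda>y. ereal (q y)) x = best_locations q x"
proof -
  have "ereal (c x y) + ereal (q y) = vfun Q c (\<lambda>y. ereal (q y)) x \<longleftrightarrow>
      (\<forall>z\<in>Q. c x y + q y \<le> c x z + q z)" if "y \<in> Q" for y
  proof
    assume eq: "ereal (c x y) + ereal (q y) = vfun Q c (\<lambda>y. ereal (q y)) x"
    show "\<forall>z\<in>Q. c x y + q y \<le> c x z + q z"
    proof
      fix z assume "z \<in> Q"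
      then have "vfun Q c (\<lambda>y. ereal (q y)) x \<le> ereal (c x z) + ereal (q z)"
        unfolding vfun_def by (rule INF_lower)
      then show "c x y + q y \<le> c x z + q z"
        unfolding eq[symmetric] by simp
    qed
  next
    assume "\<forall>z\<in>Q. c x y + q y \<le> c x z + q z"
    then show "ereal (c x y) + ereal (q y) = vfun Q c (\<lambda>y. ereal (q y)) x"
      unfolding vfun_def using that by (intro antisym INF_greatest INF_lower2[OF that]) auto
  qed
  then show ?thesis
    unfolding Tset_def best_locations_def by auto
qed

lemma SUP_Tset_ereal:
  assumes "c_lipschitz q" "x \<in> Q"
  shows "(SUP y\<in>Tset Q c (\<lambda>y. ereal (q y)) x. ereal (q y)) = ereal (best_price q x)"
proof -
  obtain y where "y \<in> best_locations q x" "best_price q x = q y"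
    using best_price_attained[OF assms] .
  then show ?thesis
    unfolding Tset_ereal using best_price_ge[OF assms]
    by (intro antisym SUP_least SUP_upper2) auto
qed

definition c_transform :: "('a \<Rightarrow> real) \<Rightarrow> 'a \<Rightarrow> real" where
  "c_transform v y = (SUP x\<in>Q. v x - c x y)"

lemma c_transform_le:
  assumes "\<And>x. x \<in> Q \<Longrightarrow> v x - c x y \<le> r"
  shows "c_transform v y \<le> r"
  unfolding c_transform_def using Q_nonempty assms by (rule cSUP_least)

lemma c_transform_ge:
  assumes "bdd_above (v ` Q)" "x \<in> Q" "y \<in> Q"
  shows "v x \<le> c x y + c_transform v y"
proof -
  obtain b where "\<And>x. x \<in> Q \<Longrightarrow> v x \<le> b"
    using assms(1) by (auto simp: bdd_above_def)
  moreover have "0 \<le> c x y" if "x \<in> Q" for x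
    using c_nonneg that assms(3) .
  ultimately have "bdd_above ((\<lambda>x. v x - c x y) ` Q)"
    by (intro bdd_aboveI2[of _ _ b]) (smt (verit))
  then have "v x - c x y \<le> c_transform v y"
    unfolding c_transform_def using assms(2) by (rule cSUP_upper2) simp
  then show ?thesis
    by simp
qed

lemma c_transform_c_lipschitz:
  assumes "bdd_above (v ` Q)"
  shows "c_lipschitz (c_transform v)"
proof -
  have "c_transform v y \<le> c_transform v y' + e"
    if "y \<in> Q" "y' \<in> Q" "\<forall>x\<in>Q. \<bar>c x y - c x y'\<bar> < e" for y y' e
  proof (rule c_transform_le)
    fix x assume "x \<in> Q"
    then have "v x - c x y \<le> v x - c x y' + e"
      using that(3) by (auto simp: abs_less_iff)
    also have "\<dots> \<le> c_transform v y' + e"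
      using c_transform_ge[OF assms \<open>x \<in> Q\<close> that(2)] by simp
    finally show "v x - c x y \<le> c_transform v y' + e" .
  qed
  moreover have "\<forall>x\<in>Q. \<bar>c x y' - c x y\<bar> < e" if "\<forall>x\<in>Q. \<bar>c x y - c x y'\<bar> < e" for y y' e
    using that by (simp add: abs_minus_commute)
  ultimately show ?thesis
    unfolding c_lipschitz_def abs_le_iff by (smt (verit))
qed

lemma c_transform_le_price:
  assumes "y \<in> Q" "\<And>x. x \<in> Q \<Longrightarrow> ereal (v x) \<le> ereal (c x y) + p y"
  shows "ereal (c_transform v y) \<le> p y"
proof (cases "p y")
  case (real r)
  have "c_transform v y \<le> r"
    using assms(2) by (intro c_transform_le) (simp add: real algebra_simps)
  then show ?thesis
    using real by simp
next
  case MInf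
  then show ?thesis
    using assms(2) Q_nonempty by auto
qed simp

lemma c_transform_best_locations:
  assumes "bdd_above (v ` Q)" "x \<in> Q" "y \<in> Q"
    and "ereal (c_transform v y) \<le> p y" "ereal (c x y) + p y = ereal (v x)"
  shows "y \<in> best_locations (c_transform v) x" "p y = ereal (c_transform v y)"
proof -
  have "v x \<le> c x y + c_transform v y"
    using c_transform_ge[OF assms(1-3)] .
  with assms(4,5) show eq: "p y = ereal (c_transform v y)"
    by (cases "p y") auto
  show "y \<in> best_locations (c_transform v) x"
    unfolding best_locations_def
    using assms(3,5) eq c_transform_ge[OF assms(1,2)] by auto
qed


lemma vfun_real_bounded:
  assumes "lsc_on Q p" "\<forall>y\<in>Q. p y \<noteq> -\<infinity>"
    and "x0 \<in> Q" "p x0 \<le> ereal K" and M: "\<And>x y. x \<in> Q \<Longrightarrow> y \<in> Q \<Longrightarrow> c x y \<le> M"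
    and "x \<in> Q"
  shows "vfun Q c p x = ereal (real_of_ereal (vfun Q c p x))" "real_of_ereal (vfun Q c p x) \<le> M + K"
proof -
  obtain m where m: "\<forall>y\<in>Q. ereal m \<le> p y"
    using lsc_on_bounded_below[OF compact_Q assms(1,2)] .
  have "ereal m \<le> vfun Q c p x"
    unfolding vfun_def
  proof (rule INF_greatest)
    fix y assume "y \<in> Q"
    then have "ereal 0 + ereal m \<le> ereal (c x y) + p y"
      using c_nonneg[OF \<open>x \<in> Q\<close>] m by (intro add_mono) auto
    then show "ereal m \<le> ereal (c x y) + p y"
      by simp
  qed
  moreover have "vfun Q c p x \<le> ereal (M + K)"
    unfolding vfun_def
  proof (rule INF_lower2[OF assms(3)])
    show "ereal (c x x0) + p x0 \<le> ereal (M + K)"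
      using add_mono[OF _ assms(4), of "ereal (c x x0)" "ereal M"] M[OF \<open>x \<in> Q\<close> assms(3)] by simp
  qed
  ultimately show "vfun Q c p x = ereal (real_of_ereal (vfun Q c p x))"
    "real_of_ereal (vfun Q c p x) \<le> M + K"
    by (cases "vfun Q c p x"; simp)+
qed

lemma exists_c_lipschitz_improvement:
  assumes "lsc_on Q p" "\<forall>y\<in>Q. p y \<noteq> -\<infinity>"
    and "x0 \<in> Q" "p x0 \<le> ereal K" and M: "\<And>x y. x \<in> Q \<Longrightarrow> y \<in> Q \<Longrightarrow> c x y \<le> M"
  obtains q where "c_lipschitz q" "\<And>y. y \<in> Q \<Longrightarrow> ereal (q y) \<le> p y"
    "\<And>y. y \<in> Q \<Longrightarrow> q y \<le> M + K" "\<And>y y'. y \<in> Q \<Longrightarrow> y' \<in> Q \<Longrightarrow> q y' \<le> q y + M"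
    "\<And>x. x \<in> Q \<Longrightarrow> (SUP y\<in>Tset Q c p x. p y) \<le> ereal (best_price q x)"
proof -
  define v where "v x = real_of_ereal (vfun Q c p x)" for x
  have v: "vfun Q c p x = ereal (v x)" "v x \<le> M + K" if "x \<in> Q" for x
    unfolding v_def using vfun_real_bounded[OF assms that] by simp_all
  have bdd: "bdd_above (v ` Q)"
    using v(2) by (intro bdd_aboveI2) auto
  have v_le: "ereal (v x) \<le> ereal (c x y) + p y" if "x \<in> Q" "y \<in> Q" for x y
    using v(1)[OF that(1)] INF_lower[OF that(2), of "\<lambda>y. ereal (c x y) + p y"]
    unfolding vfun_def by simp
  let ?q = "c_transform v"
  show thesis
  proof (rule that)
    show "c_lipschitz ?q"
      using c_transform_c_lipschitz[OF bdd] .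
    show le_p: "ereal (?q y) \<le> p y" if "y \<in> Q" for y
      using c_transform_le_price[of y v p] that v_le by blast
    show "?q y \<le> M + K" if "y \<in> Q" for y
      using v(2) c_nonneg[OF _ that] by (intro c_transform_le) (smt (verit))
    show "?q y' \<le> ?q y + M" if "y \<in> Q" "y' \<in> Q" for y y'
    proof (rule c_transform_le)
      fix x assume "x \<in> Q"
      then have "v x - c x y' \<le> v x - c x y + M"
        using M[of x y] c_nonneg[of x y'] that by simp
      also have "\<dots> \<le> ?q y + M"
        using c_transform_ge[OF bdd \<open>x \<in> Q\<close> that(1)] by simp
      finally show "v x - c x y' \<le> ?q y + M" .
    qed
    show "(SUP y\<in>Tset Q c p x. p y) \<le> ereal (best_price ?q x)" if "x \<in> Q" for x
    proof (rule SUP_least)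
      fix y assume "y \<in> Tset Q c p x"
      then have y: "y \<in> Q" "ereal (c x y) + p y = ereal (v x)"
        unfolding Tset_def using v(1)[OF that] by auto
      have "y \<in> best_locations ?q x" "p y = ereal (?q y)"
        using c_transform_best_locations[where p=p, OF bdd that y(1) le_p[OF y(1)] y(2)] by auto
      then show "p y \<le> ereal (best_price ?q x)"
        using best_price_ge[OF c_transform_c_lipschitz[OF bdd] that] by simp
    qed
  qed
qed

end

locale market = cost_space Q c for Q :: "'a::metric_space set" and c +
  fixes f :: "'a measure"
  assumes sets_f: "sets f = sets (restrict_space borel Q)"
    and finite_f: "emeasure f Q < \<infinity>"
begin

lemma space_f: "space f = Q"
  using sets_eq_imp_space_eq[OF sets_f] by (simp add: space_restrict_space)

lemma finite_measure_f: "finite_measure f"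
  using finite_f by (intro finite_measureI) (simp add: space_f)

lemma best_price_measurable:
  assumes "c_lipschitz q" shows "best_price q \<in> borel_measurable f"
  unfolding borel_measurable_iff_ge
proof
  fix a
  have "{x\<in>Q. a \<le> best_price q x} \<in> sets borel"
    using closed_best_price_superlevel[OF assms] by (rule borel_closed)
  then have "Q \<inter> {x\<in>Q. a \<le> best_price q x} \<in> sets (restrict_space borel Q)"
    unfolding sets_restrict_space by (rule imageI)
  moreover have "{w \<in> space f. a \<le> best_price q w} = Q \<inter> {x\<in>Q. a \<le> best_price q x}"
    unfolding space_f by blast
  ultimately show "{w \<in> space f. a \<le> best_price q w} \<in> sets f"
    unfolding sets_f by simp
qed

lemma Ffun_c_lipschitz:
  assumes "c_lipschitz q"
  shows "Ffun Q c f (\<lambda>y. ereal (q y)) = ereal (integral\<^sup>L f (best_price q))"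
proof -
  obtain B where "\<And>y. y \<in> Q \<Longrightarrow> \<bar>q y\<bar> \<le> B"
    using c_lipschitz_bounded[OF assms] by blast
  then have bounded: "\<bar>best_price q x\<bar> \<le> B" if "x \<in> space f" for x
    using best_price_bounded[OF assms] that space_f by simp
  have "Ffun Q c f (\<lambda>y. ereal (q y)) = ereal_integral f (\<lambda>x. ereal (best_price q x))"
    unfolding Ffun_def using SUP_Tset_ereal[OF assms] space_f by (intro ereal_integral_cong) simp
  also have "\<dots> = ereal (integral\<^sup>L f (best_price q))"
    using ereal_integral_bounded[OF finite_measure_f best_price_measurable[OF assms] bounded] .
  finally show ?thesis .
qed


lemma Ffun_nonpos:
  assumes "\<And>x y. x \<in> Q \<Longrightarrow> y \<in> Tset Q c p x \<Longrightarrow> p y \<le> 0"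
  shows "Ffun Q c f p \<le> 0"
  unfolding Ffun_def using assms by (intro ereal_integral_nonpos SUP_least) (auto simp: space_f)

lemma Ffun_nonpos_if_MInfty:
  assumes "y \<in> Q" "p y = -\<infinity>"
  shows "Ffun Q c f p \<le> 0"
proof (rule Ffun_nonpos)
  fix x y' assume "x \<in> Q" "y' \<in> Tset Q c p x"
  then have "ereal (c x y') + p y' = vfun Q c p x"
    unfolding Tset_def by simp
  also have "\<dots> \<le> ereal (c x y) + p y"
    unfolding vfun_def using \<open>y \<in> Q\<close> by (rule INF_lower)
  finally show "p y' \<le> 0"
    using \<open>p y = -\<infinity>\<close> by (cases "p y'") auto
qed

lemma Ffun_zero: "Ffun Q c f (\<lambda>y. ereal 0) = 0"
proof -
  have zero: "c_lipschitz (\<lambda>y. 0)"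
    unfolding c_lipschitz_def by simp
  have "best_price (\<lambda>y. 0) x = 0" if "x \<in> space f" for x
    using best_price_attained[OF zero, of x] that space_f by metis
  then show ?thesis
    using Ffun_c_lipschitz[OF zero] by (simp cong: Bochner_Integration.integral_cong)
qed

lemma Ffun_upper_semicontinuous:
  assumes qs: "\<And>n. c_lipschitz (qs n)" "\<And>z. z \<in> Q \<Longrightarrow> (\<lambda>n. qs n z) \<longlonglongrightarrow> q z"
    and bounded: "\<And>n y. y \<in> Q \<Longrightarrow> \<bar>qs n y\<bar> \<le> B"
    and a: "\<forall>\<^sub>F n in sequentially. a \<le> Ffun Q c f (\<lambda>y. ereal (qs n y))"
  shows "a \<le> Ffun Q c f (\<lambda>y. ereal (q y))"
proof -
  let ?G = "\<lambda>n x. max (best_price (qs n) x) (best_price q x)"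
  have q: "c_lipschitz q"
    using c_lipschitz_limit[OF qs] .
  have "\<bar>q y\<bar> \<le> B" if "y \<in> Q" for y
    using bounded[OF that] by (intro tendsto_upperbound[OF tendsto_rabs[OF qs(2)[OF that]]]) auto
  then have bp_bounded: "\<bar>best_price (qs n) x\<bar> \<le> B" "\<bar>best_price q x\<bar> \<le> B" if "x \<in> space f" for n x
    using best_price_bounded[OF qs(1) _ bounded] best_price_bounded[OF q] that space_f by auto
  have meas: "best_price (qs n) \<in> borel_measurable f" "?G n \<in> borel_measurable f" for n
    using best_price_measurable[OF qs(1)] best_price_measurable[OF q] by auto
  have integrable: "integrable f (best_price (qs n))" "integrable f (?G n)" for n
    using meas bp_bounded
    by (auto intro!: finite_measure.integrable_const_bound[OF finite_measure_f, where B=B] AE_I2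
        simp: abs_le_iff max_def)
  have "(\<lambda>n. integral\<^sup>L f (?G n)) \<longlonglongrightarrow> integral\<^sup>L f (best_price q)"
  proof (rule integral_dominated_convergence[where w="\<lambda>x. B"])
    show "AE x in f. (\<lambda>n. ?G n x) \<longlonglongrightarrow> best_price q x"
      using best_price_limsup[OF qs] by (intro AE_I2) (simp add: space_f)
    show "AE x in f. norm (?G n x) \<le> B" for n
      using bp_bounded by (intro AE_I2) (auto simp: abs_le_iff max_def)
  qed (use meas best_price_measurable[OF q] finite_measure.integrable_const[OF finite_measure_f] in auto)
  then have "(\<lambda>n. ereal (integral\<^sup>L f (?G n))) \<longlonglongrightarrow> ereal (integral\<^sup>L f (best_price q))"
    by simp
  moreover have "\<forall>\<^sub>F n in sequentially. a \<le> ereal (integral\<^sup>L f (?G n))"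
    using a
  proof eventually_elim
    case (elim n)
    have "integral\<^sup>L f (best_price (qs n)) \<le> integral\<^sup>L f (?G n)"
      using integrable by (intro integral_mono) auto
    with elim show ?case
      unfolding Ffun_c_lipschitz[OF qs(1)] by (auto intro: order_trans)
  qed
  ultimately have "a \<le> ereal (integral\<^sup>L f (best_price q))"
    by (intro tendsto_lowerbound) auto
  then show ?thesis
    unfolding Ffun_c_lipschitz[OF q] .
qed

end

locale pricing = market Q c f for Q :: "'a::metric_space set" and c f +
  fixes p0 :: "'a \<Rightarrow> ereal"
  assumes p0_nonneg: "\<And>x. x \<in> Q \<Longrightarrow> 0 \<le> p0 x"
    and p0_finite: "\<exists>x\<in>Q. p0 x \<noteq> \<infinity>"
begin

definition candidates :: "real \<Rightarrow> ('a \<Rightarrow> real) set" where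
  "candidates B = {q. c_lipschitz q \<and> (\<forall>y\<in>Q. ereal (q y) \<le> p0 y) \<and> (\<forall>y\<in>Q. \<bar>q y\<bar> \<le> B)}"

lemma candidate_admissible:
  assumes "q \<in> candidates B" shows "(\<lambda>y. ereal (q y)) \<in> admissible Q p0"
  unfolding admissible_def lsc_on_def
proof (intro CollectI conjI ballI allI impI)
  show "ereal (q x) \<le> p0 x" if "x \<in> Q" for x
    using assms that unfolding candidates_def by blast
next
  fix x and t :: ereal assume "x \<in> Q" "t < ereal (q x)"
  then obtain r where "t < ereal r" "r < q x"
    using ereal_dense2 by (metis less_ereal.simps(1))
  moreover have "continuous_on Q q"
    using assms c_lipschitz_continuous_on unfolding candidates_def by blast
  ultimately obtain e where "e > 0" "\<forall>y\<in>Q. dist y x < e \<longrightarrow> dist (q y) (q x) < q x - r"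
    using \<open>x \<in> Q\<close> unfolding continuous_on_iff by (metis diff_gt_0_iff_gt)
  with \<open>t < ereal r\<close> show "\<exists>e>0. \<forall>y\<in>Q. dist y x < e \<longrightarrow> t < ereal (q y)"
    by (intro exI[of _ e]) (force simp: dist_real_def abs_less_iff intro: less_le_trans)
qed

lemma candidates_limit:
  assumes "\<And>n. qs n \<in> candidates B" "\<And>y. y \<in> Q \<Longrightarrow> (\<lambda>n. qs n y) \<longlonglongrightarrow> q y"
  shows "q \<in> candidates B"
proof -
  have "c_lipschitz q"
    using assms c_lipschitz_limit unfolding candidates_def by blast
  moreover have "\<bar>q y\<bar> \<le> B" if "y \<in> Q" for y
    using assms that unfolding candidates_def
    by (intro tendsto_upperbound[OF tendsto_rabs[OF assms(2)[OF that]]]) auto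
  moreover have "ereal (q y) \<le> p0 y" if "y \<in> Q" for y
  proof (cases "p0 y")
    case (real r)
    have "qs n y \<le> r" for n
      using assms(1)[of n] that real unfolding candidates_def by auto
    then have "q y \<le> r"
      by (intro tendsto_upperbound[OF assms(2)[OF that]]) auto
    then show ?thesis
      using real by simp
  qed (use p0_nonneg that in auto)
  ultimately show ?thesis
    unfolding candidates_def by blast
qed

lemma candidates_convergent_subsequence:
  fixes qs :: "nat \<Rightarrow> 'a \<Rightarrow> real"
  assumes "\<And>n. qs n \<in> candidates B"
  obtains k q where "strict_mono (k :: nat \<Rightarrow> nat)" "q \<in> candidates B" "\<And>y. y \<in> Q \<Longrightarrow> (\<lambda>n. qs (k n) y) \<longlonglongrightarrow> q y"
proof -
  obtain k where k: "strict_mono k" and conv: "\<And>y. y \<in> Q \<Longrightarrow> convergent (\<lambda>n. qs (k n) y)"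
    using c_lipschitz_convergent_subsequence[of qs B] assms unfolding candidates_def by blast
  define q where "q y = lim (\<lambda>n. qs (k n) y)" for y
  have lim: "(\<lambda>n. qs (k n) y) \<longlonglongrightarrow> q y" if "y \<in> Q" for y
    unfolding q_def using conv[OF that] by (simp add: convergent_LIMSEQ_iff)
  show thesis
    using that[OF k candidates_limit[OF assms lim] lim] .
qed

lemma improved_candidate:
  assumes p: "p \<in> admissible Q p0" and F_pos: "0 < Ffun Q c f p"
    and x0: "x0 \<in> Q" "p0 x0 = ereal K" and "0 \<le> K"
    and M: "\<And>x y. x \<in> Q \<Longrightarrow> y \<in> Q \<Longrightarrow> c x y \<le> M"
  shows "\<exists>q\<in>candidates (M + K). Ffun Q c f p \<le> Ffun Q c f (\<lambda>y. ereal (q y))"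
proof -
  have p_le: "\<And>y. y \<in> Q \<Longrightarrow> p y \<le> p0 y" and lsc: "lsc_on Q p"
    using p unfolding admissible_def by auto
  have "p y \<noteq> -\<infinity>" if "y \<in> Q" for y
    using Ffun_nonpos_if_MInfty[OF that] F_pos by force
  moreover have "p x0 \<le> ereal K"
    using p_le[OF x0(1)] x0(2) by simp
  ultimately obtain q where q: "c_lipschitz q" "\<And>y. y \<in> Q \<Longrightarrow> ereal (q y) \<le> p y"
    "\<And>y. y \<in> Q \<Longrightarrow> q y \<le> M + K" "\<And>y y'. y \<in> Q \<Longrightarrow> y' \<in> Q \<Longrightarrow> q y' \<le> q y + M"
    "\<And>x. x \<in> Q \<Longrightarrow> (SUP y\<in>Tset Q c p x. p y) \<le> ereal (best_price q x)"
    using exists_c_lipschitz_improvement[OF lsc _ x0(1) _ M] by blast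
  have F_le: "Ffun Q c f p \<le> Ffun Q c f (\<lambda>y. ereal (q y))"
    unfolding Ffun_def using q(5) SUP_Tset_ereal[OF q(1)]
    by (intro ereal_integral_mono) (simp add: space_f)
  text \<open>A positive value forces q to be nonnegative somewhere, and its oscillation bound then
    bounds it below.\<close>
  have "\<exists>y0\<in>Q. 0 \<le> q y0"
  proof (rule ccontr)
    assume "\<not> (\<exists>y0\<in>Q. 0 \<le> q y0)"
    then have "Ffun Q c f (\<lambda>y. ereal (q y)) \<le> 0"
      by (intro Ffun_nonpos) (auto simp: Tset_def)
    with F_pos F_le show False
      by simp
  qed
  then obtain y0 where "y0 \<in> Q" "0 \<le> q y0" ..
  then have "\<bar>q y\<bar> \<le> M + K" if "y \<in> Q" for y
    using q(3)[OF that] q(4)[OF that \<open>y0 \<in> Q\<close>] \<open>0 \<le> K\<close>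
    unfolding abs_le_iff by linarith
  moreover have "ereal (q y) \<le> p0 y" if "y \<in> Q" for y
    using q(2)[OF that] p_le[OF that] by (rule order_trans)
  ultimately have "q \<in> candidates (M + K)"
    using q(1) unfolding candidates_def by blast
  with F_le show ?thesis ..
qed

lemma candidates_dominate:
  obtains B where "\<And>p. p \<in> admissible Q p0 \<Longrightarrow>
    \<exists>q\<in>candidates B. Ffun Q c f p \<le> Ffun Q c f (\<lambda>y. ereal (q y))"
proof -
  obtain x0 where "x0 \<in> Q" "p0 x0 \<noteq> \<infinity>"
    using p0_finite by blast
  moreover obtain K where "p0 x0 = ereal K"
    using calculation p0_nonneg[OF calculation(1)] by (cases "p0 x0") auto
  ultimately have x0: "x0 \<in> Q" "p0 x0 = ereal K" and "0 \<le> K"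
    using p0_nonneg[of x0] by auto
  obtain M where M: "\<And>x y. x \<in> Q \<Longrightarrow> y \<in> Q \<Longrightarrow> c x y \<le> M"
    using c_bounded by blast
  have "(\<lambda>y. 0) \<in> candidates (M + K)"
    using p0_nonneg \<open>0 \<le> K\<close> M[OF x0(1) x0(1)] c_nonneg[OF x0(1) x0(1)]
    unfolding candidates_def c_lipschitz_def by (auto simp: zero_ereal_def[symmetric])
  then have "\<exists>q\<in>candidates (M + K). Ffun Q c f p \<le> Ffun Q c f (\<lambda>y. ereal (q y))"
    if "p \<in> admissible Q p0" for p
    using improved_candidate[OF that _ x0 \<open>0 \<le> K\<close> M] Ffun_zero
    by (cases "Ffun Q c f p \<le> 0") (auto intro!: bexI[of _ "\<lambda>y. 0"])
  then show thesis
    using that by blast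
qed

lemma exists_optimal_candidate:
  assumes dominate: "\<And>p. p \<in> admissible Q p0 \<Longrightarrow>
    \<exists>q\<in>candidates B. Ffun Q c f p \<le> Ffun Q c f (\<lambda>y. ereal (q y))"
  shows "\<exists>q\<in>candidates B. \<forall>p\<in>admissible Q p0. Ffun Q c f p \<le> Ffun Q c f (\<lambda>y. ereal (q y))"
proof -
  let ?F = "Ffun Q c f"
  have "(\<lambda>y. -\<infinity>) \<in> admissible Q p0"
    unfolding admissible_def lsc_on_def by simp
  then obtain u where u: "incseq u" "range u \<subseteq> ?F ` admissible Q p0"
    "Sup (?F ` admissible Q p0) = (SUP n. u n)"
    using Sup_countable_SUP[of "?F ` admissible Q p0"] by blast
  have "\<exists>q. q \<in> candidates B \<and> u n \<le> ?F (\<lambda>y. ereal (q y))" for n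
  proof -
    obtain p where "p \<in> admissible Q p0" "u n = ?F p"
      using u(2) by auto
    then show ?thesis
      using dominate by auto
  qed
  then obtain qs where qs: "\<And>n. qs n \<in> candidates B" "\<And>n. u n \<le> ?F (\<lambda>y. ereal (qs n y))"
    by metis
  then obtain k q where k: "strict_mono k" and q: "q \<in> candidates B"
    and lim: "\<And>y. y \<in> Q \<Longrightarrow> (\<lambda>n. qs (k n) y) \<longlonglongrightarrow> q y"
    using candidates_convergent_subsequence by metis
  have "u N \<le> ?F (\<lambda>y. ereal (q y))" for N
  proof (rule Ffun_upper_semicontinuous[where qs="\<lambda>n. qs (k n)"])
    show "\<forall>\<^sub>F n in sequentially. u N \<le> ?F (\<lambda>y. ereal (qs (k n) y))"
      unfolding eventually_sequentially
    proof (intro exI allI impI)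
      fix n assume "N \<le> n"
      then have "u N \<le> u (k n)"
        using incseqD[OF u(1)] seq_suble[OF k, of n] by simp
      then show "u N \<le> ?F (\<lambda>y. ereal (qs (k n) y))"
        using qs(2)[of "k n"] by (rule order_trans)
    qed
  qed (use qs(1) lim in \<open>auto simp: candidates_def\<close>)
  then have "Sup (?F ` admissible Q p0) \<le> ?F (\<lambda>y. ereal (q y))"
    unfolding u(3) by (rule SUP_least)
  moreover have "?F p \<le> Sup (?F ` admissible Q p0)" if "p \<in> admissible Q p0" for p
    using that by (intro Sup_upper imageI)
  ultimately show ?thesis
    using q by (meson order_trans)
qed

end

theorem mainTheorem3:
  fixes Q :: "'a::metric_space set"
    and p0 :: "'a \<Rightarrow> ereal"
    and c :: "'a \<Rightarrow> 'a \<Rightarrow> real"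
    and f :: "'a measure"
  assumes "compact Q"
    and "\<forall>x\<in>Q. 0 \<le> p0 x"
    and "\<exists>x\<in>Q. p0 x \<noteq> \<infinity>"
    and "continuous_on (Q \<times> Q) (\<lambda>(x, y). c x y)"
    and "\<forall>x\<in>Q. \<forall>y\<in>Q. 0 \<le> c x y"
    and "\<forall>x\<in>Q. c x x = 0"
    and "sets f = sets (restrict_space borel Q)"
    and "emeasure f Q < \<infinity>"
  shows "\<exists>popt\<in>admissible Q p0. \<forall>p\<in>admissible Q p0. Ffun Q c f p \<le> Ffun Q c f popt"
proof -
  interpret pricing Q c f p0
    using assms by unfold_locales auto
  obtain B where "\<And>p. p \<in> admissible Q p0 \<Longrightarrow>
      \<exists>q\<in>candidates B. Ffun Q c f p \<le> Ffun Q c f (\<lambda>y. ereal (q y))"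
    using candidates_dominate by blast
  then obtain q where "q \<in> candidates B"
    "\<forall>p\<in>admissible Q p0. Ffun Q c f p \<le> Ffun Q c f (\<lambda>y. ereal (q y))"
    using exists_optimal_candidate by blast
  then show ?thesis
    using candidate_admissible by blast
qed

end
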